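(* Let $\mathcal{X}$ be a finite-dimensional real Hilbert space with norm $\|\cdot\|$. Let $\mathbb{P}_{\mathrm{true}}$ be a probability distribution on $\mathcal{X}$ whose support $\mathcal{M}$ is a convex, compact set, and let $\mathbb{P}^1$ be a probability distribution on $\mathcal{X}$ with bounded support. Fix $\tau\in(0,\infty)$, $p\in[1,\infty)$, a nonzero $\mu=(\mu_1,\mu_2)\in\mathbb{R}^2_{\ge 0}$ with $\mu_1+\mu_2<2$, and a sequence $\{\gamma_k\}$ with $\gamma_k\in(0,1]$, $\gamma_k\to 0$, $\sum_k\gamma_k=\infty$. Let $\Gamma$ be the set of nonnegative $1$-Lipschitz functions $\mathcal{X}\to\mathbb{R}$ (the parametrized family $\{J_\theta\}_{\theta\in\mathcal{I}}$ over which training is done is assumed to equal $\Gamma$). Define inductively, for $k\in\mathbb{N}$: $\mathcal{A}_1(u)=u$; given $\mathbb{P}^k=(\mathcal{A}_k)_\#\mathbb{P}^1$, let $J_k\in\arg\min_{J\in\Gamma}\mathbb{E}_{u\sim\mathbb{P}_{\mathrm{true}}}[J(u)+\tau J(u)^p]-\mathbb{E}_{u^k\sim\mathbb{P}^k}[J(u^k)]$, $\beta_k=\mathbb{E}_{u^k\sim\mathbb{P}^k}[J_k(u^k)]-\mathbb{E}_{u\sim\mathbb{P}_{\mathrm{true}}}[J_k(u)]$, $g_k(u)=u-(\mu_1\beta_k+\mu_2J_k(u))\nabla J_k(u)$ if $J_k$ is differentiable at $u$ and $g_k(u)=u$ otherwise, and $\mathcal{A}_{k+1}(u)=\gamma_k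 u+(1-\gamma_k)g_k(\mathcal{A}_k(u))$. Assume that for all $k\in\mathbb{N}$, $(P_{\mathcal{M}})_\#\mathbb{P}^k=\mathbb{P}_{\mathrm{true}}$ up to a set of measure zero. Then for every $k\in\mathbb{N}$, $$\beta_k=\mathbb{E}_{u^k\sim\mathbb{P}^k}\big[d_{\mathcal{M}}(u^k)\big].$$
   Context: $P_{\mathcal{M}}(u)=\arg\min_{v\in\mathcal{M}}\|v-u\|$ is the metric projection onto $\mathcal{M}$ and $d_{\mathcal{M}}(u)=\inf_{v\in\mathcal{M}}\|v-u\|$ the distance function. For a map $T$ and probability measure $\mathbb{Q}$, $T_\#\mathbb{Q}[U]=\mathbb{Q}[T^{-1}(U)]$ denotes the push-forward. *)

theory Defs
  imports "HOL-Probability.Probability"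
begin

definition measure_support :: "'a::topological_space measure \<Rightarrow> 'a set" where
  "measure_support N = {x. \<forall>U. open U \<and> x \<in> U \<longrightarrow> emeasure N U > 0}"

definition metric_proj :: "'a::metric_space set \<Rightarrow> 'a \<Rightarrow> 'a" where
  "metric_proj S u = (SOME v. v \<in> S \<and> (\<forall>w\<in>S. dist v u \<le> dist w u))"

definition grad :: "('a::real_inner \<Rightarrow> real) \<Rightarrow> 'a \<Rightarrow> 'a" where
  "grad f u = (SOME g. (f has_derivative (\<lambda>h. g \<bullet> h)) (at u))"

definition Gamma_set :: "('a::metric_space \<Rightarrow> real) set" where
  "Gamma_set = {J. (\<forall>x. 0 \<le> J x) \<and> 1-lipschitz_on UNIV J}"

definition gstep :: "real \<Rightarrow> real \<Rightarrow> real \<Rightarrow> ('a::real_inner \<Rightarrow> real) \<Rightarrow> 'a \<Rightarrow> 'a" where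
  "gstep mu1 mu2 b J u =
     (if J differentiable (at u) then u - (mu1 * b + mu2 * J u) *\<^sub>R grad J u else u)"

end

theory Submission
  imports Defs
begin

(*
  The
  competitors d_M and min d_M n lie in Gamma and vanish on M = supp P_true, so testing the
  optimality of J_k against them gives E_{P^k}[d_M] <= beta_k - tau E[J_k^p] <= beta_k (the
  truncations also make d_M integrable).  Conversely J_k is 1-Lipschitz, so
  J_k u <= J_k (P_M u) + d_M u, and integrating against P^k with (P_M)_# P^k = P_true gives
  beta_k <= E_{P^k}[d_M].

  The only technical point is the measurability of the iterates A_k, i.e. of the gradient
  step: the set where a continuous function is differentiable is Borel, because
  differentiability can be tested by countably many conditions on a countable dense set of
  increments.
*)

lemma has_derivative_grad:
  fixes f :: "'a::euclidean_space \<Rightarrow> real"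
  assumes "f differentiable (at u)"
  shows "(f has_derivative (\<lambda>h. grad f u \<bullet> h)) (at u)"
proof -
  obtain F where F: "(f has_derivative F) (at u)"
    using assms unfolding differentiable_def by blast
  have "F = (\<lambda>h. adjoint F 1 \<bullet> h)"
    using adjoint_works[OF has_derivative_linear[OF F], of _ 1] by (auto simp: inner_commute)
  then have "\<exists>g. (f has_derivative (\<lambda>h. g \<bullet> h)) (at u)"
    using F by metis
  then show ?thesis
    unfolding grad_def by (rule someI_ex)
qed

lemma difference_quotient_tendsto_grad:
  fixes f :: "'a::euclidean_space \<Rightarrow> real"
  assumes "(f has_derivative (\<lambda>h. g \<bullet> h)) (at u)"
  shows "(\<lambda>n. real (Suc n) * (f (u + (1 / real (Suc n)) *\<^sub>R v) - f u)) \<longlonglongrightarrow> g \<bullet> v"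
proof -
  have line: "((\<lambda>t::real. u + t *\<^sub>R v) has_derivative (\<lambda>t. t *\<^sub>R v)) (at 0)"
    by (auto intro!: derivative_eq_intros)
  have "((\<lambda>t. f (u + t *\<^sub>R v)) has_derivative (\<lambda>t. g \<bullet> (t *\<^sub>R v))) (at 0)"
    using has_derivative_compose[OF line, of f "\<lambda>h. g \<bullet> h"] assms by simp
  then have "((\<lambda>t. f (u + t *\<^sub>R v)) has_field_derivative (g \<bullet> v)) (at 0)"
    unfolding has_field_derivative_def by (simp add: mult.commute[of _ "g \<bullet> v"])
  then have slope: "((\<lambda>t. (f (u + t *\<^sub>R v) - f u) / t) \<longlongrightarrow> g \<bullet> v) (at 0)"
    unfolding has_field_derivative_iff by simp
  have "filterlim (\<lambda>n. 1 / real (Suc n)) (at 0) sequentially"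
  proof (rule filterlim_atI)
    show "(\<lambda>n. 1 / real (Suc n)) \<longlonglongrightarrow> 0"
      using LIMSEQ_Suc[OF lim_inverse_n] by (simp add: divide_inverse)
  qed simp
  from filterlim_compose[OF slope this] show ?thesis
    by (simp add: o_def field_simps)
qed

lemma borel_measurable_grad_on_differentiable:
  fixes f :: "'a::euclidean_space \<Rightarrow> real"
  assumes [measurable]: "f \<in> borel_measurable borel"
  obtains G where "G \<in> borel_measurable borel" "\<And>u. f differentiable (at u) \<Longrightarrow> grad f u = G u"
proof
  define G where
    "G u = (\<Sum>i\<in>Basis. lim (\<lambda>n. real (Suc n) * (f (u + (1 / real (Suc n)) *\<^sub>R i) - f u)) *\<^sub>R i)"
    for u
  show "G \<in> borel_measurable borel"
    unfolding G_def by measurable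
  fix u assume "f differentiable (at u)"
  from difference_quotient_tendsto_grad[OF has_derivative_grad[OF this]]
  have "lim (\<lambda>n. real (Suc n) * (f (u + (1 / real (Suc n)) *\<^sub>R i) - f u)) = grad f u \<bullet> i" for i
    by (rule limI)
  then show "grad f u = G u"
    by (simp add: G_def euclidean_representation)
qed

lemma has_derivative_inner_iff_dense:
  fixes f :: "'a::euclidean_space \<Rightarrow> real"
  assumes f: "continuous_on UNIV f"
    and dense: "\<And>X. open X \<Longrightarrow> X \<noteq> {} \<Longrightarrow> \<exists>x\<in>D. x \<in> X"
  shows "(f has_derivative (\<lambda>h. g \<bullet> h)) (at u) \<longleftrightarrow>
    (\<forall>e::nat. \<exists>d::nat. \<forall>h\<in>D. 0 < norm h \<and> norm h < 1 / real (Suc d) \<longrightarrow>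
       \<bar>f (u + h) - f u - g \<bullet> h\<bar> \<le> norm h / real (Suc e))"
    (is "_ \<longleftrightarrow> (\<forall>e. \<exists>d. ?small e d)")
proof
  assume der: "(f has_derivative (\<lambda>h. g \<bullet> h)) (at u)"
  show "\<forall>e. \<exists>d. ?small e d"
  proof
    fix e :: nat
    obtain r where "r > 0" and r: "\<And>y. norm (y - u) < r \<Longrightarrow>
        norm (f y - f u - g \<bullet> (y - u)) \<le> 1 / real (Suc e) * norm (y - u)"
      using der unfolding has_derivative_at_alt
      by (metis of_nat_Suc zero_less_divide_1_iff of_nat_0_less_iff zero_less_Suc)
    obtain d :: nat where "1 / real (Suc d) < r"
      using \<open>r > 0\<close> by (metis nat_approx_posE)
    then have "?small e d"
      using r[of "u + _"] by force
    then show "\<exists>d. ?small e d" ..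
  qed
next
  assume small: "\<forall>e. \<exists>d. ?small e d"
  have "\<exists>r>0. \<forall>y. norm (y - u) < r \<longrightarrow> norm (f y - f u - g \<bullet> (y - u)) \<le> \<epsilon> * norm (y - u)"
    if "\<epsilon> > 0" for \<epsilon>
  proof -
    obtain e :: nat where e: "1 / real (Suc e) < \<epsilon>"
      using \<open>\<epsilon> > 0\<close> by (metis nat_approx_posE)
    obtain d where d: "?small e d"
      using small by blast
    \<comment> \<open>The bad increments form an open set, since the error term is continuous;
      it misses the dense set D, so it is empty.\<close>
    define V where "V = {h. 0 < norm h \<and> norm h < 1 / real (Suc d) \<and>
        norm h / real (Suc e) < \<bar>f (u + h) - f u - g \<bullet> h\<bar>}"
    have "continuous_on UNIV (\<lambda>h. f (u + h))"
      by (rule continuous_on_compose2[OF f]) (auto intro: continuous_intros)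
    then have "open V"
      unfolding V_def Collect_conj_eq
      by (intro open_Int open_Collect_less continuous_intros) auto
    moreover have "V \<inter> D = {}"
      using d unfolding V_def by force
    ultimately have "V = {}"
      using dense by blast
    then have "norm (f y - f u - g \<bullet> (y - u)) \<le> \<epsilon> * norm (y - u)"
      if "norm (y - u) < 1 / real (Suc d)" for y
    proof (cases "y = u")
      case False
      then have "norm (f y - f u - g \<bullet> (y - u)) \<le> 1 / real (Suc e) * norm (y - u)"
        using that \<open>V = {}\<close> unfolding V_def by (auto dest!: spec[of _ "y - u"])
      also have "\<dots> \<le> \<epsilon> * norm (y - u)"
        using e by (intro mult_right_mono) auto
      finally show ?thesis .
    qed simp
    then show ?thesis
      by (intro exI[of _ "1 / real (Suc d)"]) auto
  qed
  then show "(f has_derivative (\<lambda>h. g \<bullet> h)) (at u)"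
    unfolding has_derivative_at_alt by (simp add: bounded_linear_inner_right)
qed

lemma sets_borel_has_derivative_inner:
  fixes f :: "'a::euclidean_space \<Rightarrow> real"
  assumes f: "continuous_on UNIV f" and [measurable]: "G \<in> borel_measurable borel"
  shows "{u. (f has_derivative (\<lambda>h. G u \<bullet> h)) (at u)} \<in> sets borel"
proof -
  obtain D :: "'a set"
    where "countable D" and dense: "\<And>X. open X \<Longrightarrow> X \<noteq> {} \<Longrightarrow> \<exists>x\<in>D. x \<in> X"
    using countable_dense_exists by blast
  then have "D \<noteq> {}"
    by blast
  define d where "d = from_nat_into D"
  have D: "D = range d"
    unfolding d_def using range_from_nat_into[OF \<open>D \<noteq> {}\<close> \<open>countable D\<close>] ..
  have [measurable]: "f \<in> borel_measurable borel"
    using f by (rule borel_measurable_continuous_onI)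
  have "{u. (f has_derivative (\<lambda>h. G u \<bullet> h)) (at u)} =
      {u. \<forall>e::nat. \<exists>k::nat. \<forall>m. 0 < norm (d m) \<and> norm (d m) < 1 / real (Suc k) \<longrightarrow>
         \<bar>f (u + d m) - f u - G u \<bullet> d m\<bar> \<le> norm (d m) / real (Suc e)}"
    by (simp add: has_derivative_inner_iff_dense[OF f dense] D)
  also have "\<dots> \<in> sets borel"
    by measurable
  finally show ?thesis .
qed

lemma gstep_borel_measurable:
  fixes J :: "'a::euclidean_space \<Rightarrow> real"
  assumes J: "continuous_on UNIV J"
  shows "gstep m1 m2 b J \<in> borel_measurable borel"
proof -
  have [measurable]: "J \<in> borel_measurable borel"
    using J by (rule borel_measurable_continuous_onI)
  obtain G where [measurable]: "G \<in> borel_measurable borel"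
    and G: "\<And>u. J differentiable (at u) \<Longrightarrow> grad J u = G u"
    using borel_measurable_grad_on_differentiable[of J] by auto
  define S where "S = {u. (J has_derivative (\<lambda>h. G u \<bullet> h)) (at u)}"
  have [measurable]: "S \<in> sets borel"
    unfolding S_def using J by (rule sets_borel_has_derivative_inner) simp
  have "J differentiable (at u) \<longleftrightarrow> u \<in> S" for u
    using has_derivative_grad[of J u] G[of u] unfolding S_def differentiable_def by auto
  then have "gstep m1 m2 b J = (\<lambda>u. if u \<in> S then u - (m1 * b + m2 * J u) *\<^sub>R G u else u)"
    using G by (auto simp: gstep_def fun_eq_iff)
  then show ?thesis
    by simp
qed

lemma Gamma_set_continuous: "K \<in> Gamma_set \<Longrightarrow> continuous_on UNIV K"
  unfolding Gamma_set_def by (auto intro: lipschitz_on_continuous_on)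

lemma infdist_in_Gamma_set: "(\<lambda>x. infdist x S) \<in> Gamma_set"
  unfolding Gamma_set_def
  by (auto intro!: lipschitz_onI infdist_nonneg simp: dist_real_def dist_commute)
     (smt (verit) infdist_triangle dist_commute)

lemma min_const_in_Gamma_set:
  assumes "K \<in> Gamma_set" "0 \<le> c"
  shows "(\<lambda>x. min (K x) c) \<in> Gamma_set"
proof -
  have "dist (min (K x) c) (min (K y) c) \<le> dist x y" for x y
    using lipschitz_onD[of 1 UNIV K x y] assms(1) unfolding Gamma_set_def
    by (auto simp: dist_real_def)
  then show ?thesis
    using assms unfolding Gamma_set_def by (auto intro!: lipschitz_onI)
qed

lemma measure_support_compl_null:
  fixes N :: "'a::second_countable_topology measure"
  assumes N: "sets N = sets borel"
  shows "- measure_support N \<in> null_sets N"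
proof -
  obtain B :: "'a set set" where "countable B" and B: "topological_basis B"
    using ex_countable_basis by blast
  have B_sets: "b \<in> sets N" and B_open: "open b" if "b \<in> B" for b
    using topological_basis_open[OF B that] N by auto
  have "- measure_support N = \<Union>{b\<in>B. emeasure N b = 0}"
  proof (intro equalityI subsetI)
    fix x assume "x \<in> - measure_support N"
    then obtain U where U: "open U" "x \<in> U" "emeasure N U = 0"
      unfolding measure_support_def by auto
    obtain W where W: "W \<in> B" "x \<in> W" "W \<subseteq> U"
      using topological_basisE[OF B U(1,2)] by blast
    have "emeasure N W \<le> emeasure N U"
      using W(3) U(1) N by (intro emeasure_mono) auto
    then show "x \<in> \<Union>{b\<in>B. emeasure N b = 0}"
      using U W by auto
  next
    fix x assume "x \<in> \<Union>{b\<in>B. emeasure N b = 0}"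
    then obtain W where "W \<in> B" "x \<in> W" "emeasure N W = 0"
      by blast
    then show "x \<in> - measure_support N"
      using B_open unfolding measure_support_def by auto
  qed
  also have "\<dots> \<in> null_sets N"
  proof -
    have "(\<Union>b\<in>{b\<in>B. emeasure N b = 0}. b) \<in> null_sets N"
      using \<open>countable B\<close> B_sets by (intro null_sets_UN') (auto simp: null_sets_def)
    then show ?thesis
      by simp
  qed
  finally show ?thesis .
qed

lemma AE_in_measure_support:
  fixes N :: "'a::second_countable_topology measure"
  shows "sets N = sets borel \<Longrightarrow> AE x in N. x \<in> measure_support N"
  using AE_not_in[OF measure_support_compl_null] by simp

text \<open>A map whose push-forward is a probability measure is measurable: otherwise distr would
  have to assign measure zero to some Borel set and to its complement.\<close>
lemma measurable_of_distr_prob_space: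
  fixes g :: "'a \<Rightarrow> 'b::topological_space"
  assumes "prob_space (distr N borel g)"
  shows "g \<in> borel_measurable N"
proof (rule measurableI)
  interpret Q: prob_space "distr N borel g"
    by fact
  fix B :: "'b set" assume B: "B \<in> sets borel"
  have sig: "sigma_sets UNIV (sets borel) = sets (borel :: 'b measure)"
    by (metis sets.sigma_sets_eq space_borel)
  define \<mu> where "\<mu> A = emeasure N (g -` A \<inter> space N)" for A
  have Q: "emeasure (distr N borel g) A =
      (if A \<in> sets borel \<and> measure_space UNIV (sets borel) \<mu> then \<mu> A else 0)" for A
    unfolding distr_def \<mu>_def emeasure_measure_of_conv by (simp add: sig)
  have "emeasure (distr N borel g) UNIV = 1"
    using Q.emeasure_space_1 by simp
  then have Q_eq: "A \<in> sets borel \<Longrightarrow> emeasure (distr N borel g) A = \<mu> A" for A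
    using Q by (auto split: if_splits)
  have "emeasure (distr N borel g) B + emeasure (distr N borel g) (- B) =
      emeasure (distr N borel g) (B \<union> - B)"
    using B by (intro plus_emeasure) auto
  then have "emeasure (distr N borel g) B + emeasure (distr N borel g) (- B) = 1"
    using \<open>emeasure (distr N borel g) UNIV = 1\<close> by simp
  then consider "\<mu> B \<noteq> 0" | "\<mu> (- B) \<noteq> 0"
    using B Q_eq by fastforce
  then show "g -` B \<inter> space N \<in> sets N"
  proof cases
    case 1
    then show ?thesis
      unfolding \<mu>_def using emeasure_notin_sets by blast
  next
    case 2
    then have "g -` (- B) \<inter> space N \<in> sets N"
      unfolding \<mu>_def using emeasure_notin_sets by blast
    then have "space N - (g -` (- B) \<inter> space N) \<in> sets N"
      by auto
    also have "space N - (g -` (- B) \<inter> space N) = g -` B \<inter> space N"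
      by auto
    finally show ?thesis .
  qed
qed simp

lemma metric_proj_nearest:
  fixes S :: "'a::heine_borel set"
  assumes "closed S" "S \<noteq> {}"
  shows "metric_proj S u \<in> S" and "dist u (metric_proj S u) = infdist u S"
proof -
  obtain v where "v \<in> S" "infdist u S = dist u v"
    using infdist_attains_inf[OF assms] by blast
  then have "\<exists>v. v \<in> S \<and> (\<forall>w\<in>S. dist v u \<le> dist w u)"
    by (metis dist_commute infdist_le)
  then have nearest: "metric_proj S u \<in> S \<and> (\<forall>w\<in>S. dist (metric_proj S u) u \<le> dist w u)"
    unfolding metric_proj_def by (rule someI_ex)
  then show "metric_proj S u \<in> S"
    by blast
  show "dist u (metric_proj S u) = infdist u S"
    using nearest \<open>v \<in> S\<close> \<open>infdist u S = dist u v\<close>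
    by (metis antisym dist_commute infdist_le)
qed

lemma integrable_continuous_AE_compact:
  fixes f :: "'a::metric_space \<Rightarrow> real"
  assumes "finite_measure N" "sets N = sets borel" "compact S" "AE x in N. x \<in> S"
    and f: "continuous_on UNIV f"
  shows "integrable N f"
proof -
  have "bounded (f ` S)"
    using compact_continuous_image[OF continuous_on_subset[OF f subset_UNIV] \<open>compact S\<close>]
    by (rule compact_imp_bounded)
  then obtain B where B: "\<forall>x\<in>S. norm (f x) \<le> B"
    by (auto simp: bounded_iff)
  have "f \<in> borel_measurable N"
    unfolding measurable_cong_sets[OF \<open>sets N = sets borel\<close> refl]
    using f by (rule borel_measurable_continuous_onI)
  then show ?thesis
    using assms(4) B by (intro finite_measure.integrable_const_bound[OF assms(1), where B=B]) auto
qed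

lemma integrable_of_bounded_truncations:
  fixes f :: "'a \<Rightarrow> real"
  assumes "finite_measure N" and [measurable]: "f \<in> borel_measurable N"
    and nonneg: "\<And>x. 0 \<le> f x" and bound: "\<And>n. (\<integral>x. min (f x) (real n) \<partial>N) \<le> C"
  shows "integrable N f"
proof (rule integrable_monotone_convergence)
  show trunc_integrable: "integrable N (\<lambda>x. min (f x) (real n))" for n
    using nonneg by (intro finite_measure.integrable_const_bound[OF assms(1), where B="real n"]) auto
  show "AE x in N. mono (\<lambda>n. min (f x) (real n))"
    by (auto simp: mono_def intro: min.mono)
  show "AE x in N. (\<lambda>n. min (f x) (real n)) \<longlonglongrightarrow> f x"
  proof (intro AE_I2 tendsto_eventually)
    fix x
    obtain m :: nat where "f x \<le> real m"
      using real_arch_simple by blast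
    then show "\<forall>\<^sub>F n in sequentially. min (f x) (real n) = f x"
      unfolding eventually_sequentially by (intro exI[of _ m]) auto
  qed
  have "incseq (\<lambda>n. \<integral>x. min (f x) (real n) \<partial>N)"
    by (auto simp: incseq_def intro!: integral_mono trunc_integrable)
  then show "(\<lambda>n. \<integral>x. min (f x) (real n) \<partial>N) \<longlonglongrightarrow> (SUP n. \<integral>x. min (f x) (real n) \<partial>N)"
    using bound by (intro LIMSEQ_incseq_SUP bdd_aboveI2)
qed simp

locale optimal_critic =
  fixes Ptrue P1 :: "'a::euclidean_space measure" and M :: "'a set" and T :: "'a \<Rightarrow> 'a"
    and J :: "'a \<Rightarrow> real" and \<tau> p :: real
  assumes Ptrue: "prob_space Ptrue" "sets Ptrue = sets borel"
    and P1: "prob_space P1" "sets P1 = sets borel"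
    and M_compact: "compact M" and AE_in_M: "AE x in Ptrue. x \<in> M"
    and T_measurable [measurable]: "T \<in> borel_measurable borel"
    and proj_pushforward: "distr P1 borel (\<lambda>u. metric_proj M (T u)) = Ptrue"
    and \<tau>: "0 \<le> \<tau>" and p: "0 < p"
    and J: "J \<in> Gamma_set"
    and J_min: "\<And>K. K \<in> Gamma_set \<Longrightarrow>
      (\<integral>u. J u + \<tau> * J u powr p \<partial>Ptrue) - (\<integral>u. J (T u) \<partial>P1)
      \<le> (\<integral>u. K u + \<tau> * K u powr p \<partial>Ptrue) - (\<integral>u. K (T u) \<partial>P1)"
begin

interpretation Ptrue: prob_space Ptrue
  by (rule Ptrue(1))

interpretation P1: prob_space P1
  by (rule P1(1))

lemma measurable_P1_eq [simp]: "measurable P1 = measurable borel"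
  using measurable_cong_sets[OF P1(2) refl] by blast

lemma M_nonempty: "M \<noteq> {}"
  using AE_in_M Ptrue.AE_False by auto

lemma J_nonneg: "0 \<le> J x"
  using J by (simp add: Gamma_set_def)

lemma J_continuous: "continuous_on UNIV J"
  using J by (rule Gamma_set_continuous)

lemma J_measurable [measurable]: "J \<in> borel_measurable borel"
  using J_continuous by (rule borel_measurable_continuous_onI)

lemma distance_measurable [measurable]: "(\<lambda>x. infdist x M) \<in> borel_measurable borel"
  by (intro borel_measurable_continuous_onI continuous_intros)

lemma integrable_critic_loss: "integrable Ptrue (\<lambda>u. J u + \<tau> * J u powr p)"
  using Ptrue.finite_measure_axioms Ptrue(2) M_compact AE_in_M
  by (rule integrable_continuous_AE_compact)
     (use J_nonneg p in \<open>auto intro!: continuous_intros continuous_on_powr' J_continuous\<close>)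

lemma expectation_le_if_vanishing_on_M:
  assumes "K \<in> Gamma_set" "\<And>x. x \<in> M \<Longrightarrow> K x = 0"
  shows "(\<integral>u. K (T u) \<partial>P1) \<le> (\<integral>u. J (T u) \<partial>P1) - (\<integral>u. J u + \<tau> * J u powr p \<partial>Ptrue)"
proof -
  have "(\<integral>u. K u + \<tau> * K u powr p \<partial>Ptrue) = 0"
    using AE_in_M assms(2) by (intro integral_eq_zero_AE) auto
  then show ?thesis
    using J_min[OF assms(1)] by simp
qed

lemma integrable_distance: "integrable P1 (\<lambda>u. infdist (T u) M)"
proof (rule integrable_of_bounded_truncations)
  show "(\<lambda>u. infdist (T u) M) \<in> borel_measurable P1"
    by simp
  show "(\<integral>u. min (infdist (T u) M) (real n) \<partial>P1)
      \<le> (\<integral>u. J (T u) \<partial>P1) - (\<integral>u. J u + \<tau> * J u powr p \<partial>Ptrue)" for n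
    by (rule expectation_le_if_vanishing_on_M[where K="\<lambda>x. min (infdist x M) (real n)"])
       (auto intro: min_const_in_Gamma_set infdist_in_Gamma_set)
qed (auto simp: P1.finite_measure_axioms infdist_nonneg)

lemma expected_distance_le_gap:
  "(\<integral>u. infdist (T u) M \<partial>P1) \<le> (\<integral>u. J (T u) \<partial>P1) - (\<integral>u. J u \<partial>Ptrue)"
proof -
  have "(\<integral>u. J u \<partial>Ptrue) \<le> (\<integral>u. J u + \<tau> * J u powr p \<partial>Ptrue)"
    using integrable_critic_loss J_nonneg \<tau> by (intro integral_mono') auto
  moreover have "(\<integral>u. infdist (T u) M \<partial>P1)
      \<le> (\<integral>u. J (T u) \<partial>P1) - (\<integral>u. J u + \<tau> * J u powr p \<partial>Ptrue)"
    by (rule expectation_le_if_vanishing_on_M) (auto intro: infdist_in_Gamma_set)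
  ultimately show ?thesis
    by linarith
qed

lemma gap_le_expected_distance:
  "(\<integral>u. J (T u) \<partial>P1) - (\<integral>u. J u \<partial>Ptrue) \<le> (\<integral>u. infdist (T u) M \<partial>P1)"
proof (cases "integrable P1 (\<lambda>u. J (T u))")
  case True
  let ?proj = "\<lambda>u. metric_proj M (T u)"
  have closed_M: "closed M"
    using M_compact by (rule compact_imp_closed)
  have proj_measurable [measurable]: "?proj \<in> borel_measurable P1"
    using proj_pushforward Ptrue(1) by (intro measurable_of_distr_prob_space) simp
  have J_proj: "(\<integral>u. J (?proj u) \<partial>P1) = (\<integral>u. J u \<partial>Ptrue)"
    and integrable_J_proj: "integrable P1 (\<lambda>u. J (?proj u))"
    using integral_distr[OF proj_measurable J_measurable]
      integrable_distr_eq[OF proj_measurable J_measurable]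
      integrable_continuous_AE_compact[OF Ptrue.finite_measure_axioms Ptrue(2) M_compact AE_in_M
        J_continuous]
    by (simp_all add: proj_pushforward)
  have "J (T u) \<le> J (?proj u) + infdist (T u) M" for u
    using lipschitz_onD[of 1 UNIV J "T u" "?proj u"] J metric_proj_nearest[OF closed_M M_nonempty]
    by (auto simp: Gamma_set_def dist_real_def)
  then have "(\<integral>u. J (T u) \<partial>P1) \<le> (\<integral>u. J (?proj u) + infdist (T u) M \<partial>P1)"
    using True integrable_J_proj integrable_distance by (intro integral_mono) auto
  then show ?thesis
    using J_proj integrable_J_proj integrable_distance by simp
next
  case False
  have "0 \<le> (\<integral>u. J u \<partial>Ptrue)" "0 \<le> (\<integral>u. infdist (T u) M \<partial>P1)"
    by (simp_all add: integral_nonneg J_nonneg infdist_nonneg)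
  with False show ?thesis
    by (simp add: not_integrable_integral_eq)
qed

lemma gap_eq_expected_distance:
  "(\<integral>u. J (T u) \<partial>P1) - (\<integral>u. J u \<partial>Ptrue) = (\<integral>u. infdist (T u) M \<partial>P1)"
  using expected_distance_le_gap gap_le_expected_distance by linarith

end

theorem lemmaA2:
  fixes Ptrue P1 :: "'a::euclidean_space measure"
    and \<tau> p \<mu>1 \<mu>2 :: real
    and \<gamma> \<beta> :: "nat \<Rightarrow> real"
    and A :: "nat \<Rightarrow> 'a \<Rightarrow> 'a"
    and J :: "nat \<Rightarrow> 'a \<Rightarrow> real"
    and M :: "'a set"
  assumes Ptrue_prob: "prob_space Ptrue" and Ptrue_sets: "sets Ptrue = sets borel"
    and P1_prob: "prob_space P1" and P1_sets: "sets P1 = sets borel"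
    and M_def: "M = measure_support Ptrue"
    and M_convex: "convex M" and M_compact: "compact M"
    and P1_bdd: "bounded (measure_support P1)"
    and tau: "0 < \<tau>" and p: "1 \<le> p"
    and mu_nonneg: "0 \<le> \<mu>1" "0 \<le> \<mu>2" and mu_nz: "(\<mu>1, \<mu>2) \<noteq> (0, 0)"
    and mu_sum: "\<mu>1 + \<mu>2 < 2"
    and gamma_range: "\<And>k. 1 \<le> k \<Longrightarrow> 0 < \<gamma> k \<and> \<gamma> k \<le> 1"
    and gamma_lim: "\<gamma> \<longlonglongrightarrow> 0" and gamma_div: "\<not> summable \<gamma>"
    and A1: "\<And>u. A 1 u = u"
    and J_mem: "\<And>k. 1 \<le> k \<Longrightarrow> J k \<in> Gamma_set"
    and J_min: "\<And>k K. 1 \<le> k \<Longrightarrow> K \<in> Gamma_set \<Longrightarrow>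
        (\<integral>u. J k u + \<tau> * J k u powr p \<partial>Ptrue) - (\<integral>u. J k (A k u) \<partial>P1)
        \<le> (\<integral>u. K u + \<tau> * K u powr p \<partial>Ptrue) - (\<integral>u. K (A k u) \<partial>P1)"
    and beta_def: "\<And>k. 1 \<le> k \<Longrightarrow> \<beta> k = (\<integral>u. J k (A k u) \<partial>P1) - (\<integral>u. J k u \<partial>Ptrue)"
    and A_rec: "\<And>k u. 1 \<le> k \<Longrightarrow>
        A (Suc k) u = \<gamma> k *\<^sub>R u + (1 - \<gamma> k) *\<^sub>R gstep \<mu>1 \<mu>2 (\<beta> k) (J k) (A k u)"
    and pushfwd: "\<And>k. 1 \<le> k \<Longrightarrow> distr P1 borel (\<lambda>u. metric_proj M (A k u)) = Ptrue"
  shows "\<forall>k\<ge>1. \<beta> k = (\<integral>u. infdist (A k u) M \<partial>P1)"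
proof (intro allI impI)
  fix k :: nat assume k: "1 \<le> k"
  have "A j \<in> borel_measurable borel" if "1 \<le> j" for j
    using that
  proof (induction j rule: dec_induct)
    case base
    then show ?case
      using A1 by simp
  next
    case (step j)
    have [measurable]: "gstep \<mu>1 \<mu>2 (\<beta> j) (J j) \<in> borel_measurable borel"
      using J_mem[OF step(1)] by (intro gstep_borel_measurable Gamma_set_continuous)
    have [measurable]: "A j \<in> borel_measurable borel"
      by (fact step.IH)
    show ?case
      using A_rec[OF step(1)] by simp
  qed
  then interpret optimal_critic Ptrue P1 M "A k" "J k" \<tau> p
    using Ptrue_sets AE_in_measure_support[OF Ptrue_sets, folded M_def] tau p k
    by (intro optimal_critic.intro)
       (simp_all add: Ptrue_prob P1_prob P1_sets M_compact pushfwd J_mem J_min)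
  show "\<beta> k = (\<integral>u. infdist (A k u) M \<partial>P1)"
    using beta_def[OF k] gap_eq_expected_distance by simp
qed

end
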